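(* The variety $\mathfrak B$ of all bicommutative algebras is generated by its free algebra of rank one, $F_1(\mathfrak B)$; that is, every polynomial identity satisfied by $F_1(\mathfrak B)$ holds in all bicommutative algebras.
   Context: $K$ is a field of characteristic $0$. A bicommutative algebra is a (nonassociative) $K$-algebra satisfying $(x_1x_2)x_3=(x_1x_3)x_2$ and $x_1(x_2x_3)=x_2(x_1x_3)$; $\mathfrak B$ is the variety of such algebras and $F_1(\mathfrak B)$ its relatively free algebra on one generator. *)

theory Defs
  imports Main "HOL.Vector_Spaces"
begin

text \<open>Nonassociative polynomials (terms) over the field 'k in the variables x_0, x_1, ...
  These are formal expressions built from variables, zero, addition, scalar multiplication
  and the (nonassociative) binary product; every element of the absolutely free
  nonassociative algebra K{x_0,x_1,...} is represented by such a term.\<close>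

datatype 'k npoly =
    PVar nat
  | PZero
  | PAdd "'k npoly" "'k npoly"
  | PSmult 'k "'k npoly"
  | PMul "'k npoly" "'k npoly"

primrec peval :: "('k \<Rightarrow> 'a::ab_group_add \<Rightarrow> 'a) \<Rightarrow> ('a \<Rightarrow> 'a \<Rightarrow> 'a) \<Rightarrow> (nat \<Rightarrow> 'a) \<Rightarrow> 'k npoly \<Rightarrow> 'a"
where
  "peval scale mult v (PVar i) = v i"
| "peval scale mult v PZero = 0"
| "peval scale mult v (PAdd p q) = peval scale mult v p + peval scale mult v q"
| "peval scale mult v (PSmult c p) = scale c (peval scale mult v p)"
| "peval scale mult v (PMul p q) = mult (peval scale mult v p) (peval scale mult v q)"

definition bicomm_algebra :: "('k::field \<Rightarrow> 'a::ab_group_add \<Rightarrow> 'a) \<Rightarrow> ('a \<Rightarrow> 'a \<Rightarrow> 'a) \<Rightarrow> bool"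
where
  "bicomm_algebra scale mult \<longleftrightarrow>
     module scale
   \<and> (\<forall>x y z. mult (x + y) z = mult x z + mult y z)
   \<and> (\<forall>x y z. mult x (y + z) = mult x y + mult x z)
   \<and> (\<forall>c x y. mult (scale c x) y = scale c (mult x y))
   \<and> (\<forall>c x y. mult x (scale c y) = scale c (mult x y))
   \<and> (\<forall>x y z. mult (mult x y) z = mult (mult x z) y)
   \<and> (\<forall>x y z. mult x (mult y z) = mult y (mult x z))"

definition holds_in :: "('k \<Rightarrow> 'a::ab_group_add \<Rightarrow> 'a) \<Rightarrow> ('a \<Rightarrow> 'a \<Rightarrow> 'a) \<Rightarrow> 'k npoly \<Rightarrow> bool"
where "holds_in scale mult f \<longleftrightarrow> (\<forall>v. peval scale mult v f = 0)"

text \<open>The congruence on terms generated by the vector space axioms, bilinearity of the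
  product and the bicommutative identities. The quotient of the term algebra by it is the
  relatively free algebra F(B); restricted to terms in the single variable x_0 it gives
  F_1(B).\<close>

inductive beq :: "'k::field npoly \<Rightarrow> 'k npoly \<Rightarrow> bool" where
  refl: "beq p p"
| sym: "beq p q \<Longrightarrow> beq q p"
| trans: "beq p q \<Longrightarrow> beq q r \<Longrightarrow> beq p r"
| cong_add: "beq p p' \<Longrightarrow> beq q q' \<Longrightarrow> beq (PAdd p q) (PAdd p' q')"
| cong_smult: "beq p p' \<Longrightarrow> beq (PSmult c p) (PSmult c p')"
| cong_mul: "beq p p' \<Longrightarrow> beq q q' \<Longrightarrow> beq (PMul p q) (PMul p' q')"
| add_assoc: "beq (PAdd (PAdd p q) r) (PAdd p (PAdd q r))"
| add_comm: "beq (PAdd p q) (PAdd q p)"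
| add_zero: "beq (PAdd PZero p) p"
| add_neg: "beq (PAdd p (PSmult (-1) p)) PZero"
| smult_add: "beq (PSmult c (PAdd p q)) (PAdd (PSmult c p) (PSmult c q))"
| add_smult: "beq (PSmult (c + d) p) (PAdd (PSmult c p) (PSmult d p))"
| smult_smult: "beq (PSmult c (PSmult d p)) (PSmult (c * d) p)"
| smult_one: "beq (PSmult 1 p) p"
| mul_add_left: "beq (PMul (PAdd p q) r) (PAdd (PMul p r) (PMul q r))"
| mul_add_right: "beq (PMul p (PAdd q r)) (PAdd (PMul p q) (PMul p r))"
| mul_smult_left: "beq (PMul (PSmult c p) q) (PSmult c (PMul p q))"
| mul_smult_right: "beq (PMul p (PSmult c q)) (PSmult c (PMul p q))"
| bicomm_left: "beq (PMul (PMul p q) r) (PMul (PMul p r) q)"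
| bicomm_right: "beq (PMul p (PMul q r)) (PMul q (PMul p r))"

primrec pvars :: "'k npoly \<Rightarrow> nat set" where
  "pvars (PVar i) = {i}"
| "pvars PZero = {}"
| "pvars (PAdd p q) = pvars p \<union> pvars q"
| "pvars (PSmult c p) = pvars p"
| "pvars (PMul p q) = pvars p \<union> pvars q"

primrec psubst :: "(nat \<Rightarrow> 'k npoly) \<Rightarrow> 'k npoly \<Rightarrow> 'k npoly" where
  "psubst s (PVar i) = s i"
| "psubst s PZero = PZero"
| "psubst s (PAdd p q) = PAdd (psubst s p) (psubst s q)"
| "psubst s (PSmult c p) = PSmult c (psubst s p)"
| "psubst s (PMul p q) = PMul (psubst s p) (psubst s q)"

text \<open>f = 0 holds in F_1(B): the elements of F_1(B) are beq-classes of terms in the single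
  variable x_0; evaluating f at the classes of s 0, s 1, ... gives the class of psubst s f
  (evaluation in the term algebra is substitution), and this must be the zero class.\<close>

definition holds_in_F1B :: "'k::field npoly \<Rightarrow> bool"
where "holds_in_F1B f \<longleftrightarrow> (\<forall>s. (\<forall>i. pvars (s i) \<subseteq> {0}) \<longrightarrow> beq (psubst s f) PZero)"

end

theory Submission
  imports Defs "HOL-Library.Multiset" "HOL-Library.Product_Plus" "HOL-Computational_Algebra.Polynomial"
begin

text \<open>By multilinearity and bicommutativity, every term evaluates in every bicommutative algebra
  to one and the same linear combination of monomials: single variables, and products of at least
  two variables, each of which is determined by the multisets L and R of variables occurring in it
  as left and as right factors. The two-dimensional algebra Q = K^2 with (a, b)(c, d) = (ad, ad) is
  generated by a single element, so it satisfies every identity of F_1(B). In Q the monomial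
  (L, R) evaluates in each coordinate to the product of the a_i for i in L and the b_j for j in R,
  and over an infinite field these functions of (a, b) are linearly independent. Hence an identity
  of F_1(B) has all its coefficients zero, and holds in every bicommutative algebra.\<close>

lemma beq_imp_peval_eq:
  assumes "bicomm_algebra scale mul" and "beq p q"
  shows "peval scale mul v p = peval scale mul v q"
proof -
  interpret module scale
    using assms(1) by (simp add: bicomm_algebra_def)
  from assms(2) show ?thesis
    by (induction rule: beq.induct)
      (use assms(1) in \<open>auto simp: bicomm_algebra_def add_ac scale_left_distrib scale_right_distrib
         scale_minus_left[of 1, simplified]\<close>)
qed

lemma peval_psubst:
  "peval scale mul v (psubst s f) = peval scale mul (\<lambda>i. peval scale mul v (s i)) f"
  by (induction f) auto

section \<open>Monomials in bicommutative algebras\<close>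

locale bicomm_mult =
  fixes mul :: "'a \<Rightarrow> 'a \<Rightarrow> 'a" (infixl "\<cdot>" 70) and v :: "nat \<Rightarrow> 'a"
  assumes right_comm: "(x \<cdot> y) \<cdot> z = (x \<cdot> z) \<cdot> y"
    and left_comm: "x \<cdot> (y \<cdot> z) = y \<cdot> (x \<cdot> z)"
begin

text \<open>Associativity holds when the middle factor is a product; hence is_product below.\<close>

lemma mult_product_assoc: "x \<cdot> ((u \<cdot> w) \<cdot> y) = (x \<cdot> (u \<cdot> w)) \<cdot> y"
  using left_comm right_comm by metis

definition lmults :: "nat multiset \<Rightarrow> 'a \<Rightarrow> 'a" where
  "lmults L w = fold_mset (\<lambda>i w. v i \<cdot> w) w L"

definition rmults :: "nat multiset \<Rightarrow> 'a \<Rightarrow> 'a" where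
  "rmults R w = fold_mset (\<lambda>i w. w \<cdot> v i) w R"

interpretation lmult: comp_fun_commute "\<lambda>i w. v i \<cdot> w"
  by unfold_locales (auto simp: fun_eq_iff left_comm)

interpretation rmult: comp_fun_commute "\<lambda>i w. w \<cdot> v i"
  by unfold_locales (auto simp: fun_eq_iff right_comm)

lemma lmults_empty [simp]: "lmults {#} w = w"
  and lmults_add_mset [simp]: "lmults (add_mset i L) w = v i \<cdot> lmults L w"
  and lmults_union [simp]: "lmults (L + M) w = lmults M (lmults L w)"
  and lmults_add_mset_inner: "lmults (add_mset i L) w = lmults L (v i \<cdot> w)"
  by (simp_all add: lmults_def lmult.fold_mset_fun_left_comm)

lemma rmults_empty [simp]: "rmults {#} w = w"
  and rmults_add_mset [simp]: "rmults (add_mset i R) w = rmults R w \<cdot> v i"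
  and rmults_union [simp]: "rmults (R + M) w = rmults M (rmults R w)"
  and rmults_add_mset_inner: "rmults (add_mset i R) w = rmults R (w \<cdot> v i)"
  by (simp_all add: rmults_def rmult.fold_mset_fun_left_comm)

definition is_product :: "'a \<Rightarrow> bool" where
  "is_product w \<longleftrightarrow> (\<exists>a b. w = a \<cdot> b)"

lemma is_product_mult [simp]: "is_product (a \<cdot> b)"
  by (auto simp: is_product_def)

lemma is_product_lmults [simp]: "is_product w \<Longrightarrow> is_product (lmults L w)"
  by (induction L) auto

lemma is_product_rmults [simp]: "is_product w \<Longrightarrow> is_product (rmults R w)"
  by (induction R) auto

lemma mult_lmults: "a \<cdot> lmults L w = lmults L (a \<cdot> w)"
  by (induction L) (simp_all, metis left_comm)

lemma mult_rmults: "is_product w \<Longrightarrow> a \<cdot> rmults R w = rmults R (a \<cdot> w)"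
proof (induction R)
  case (add r R)
  then obtain p q where "rmults R w = p \<cdot> q"
    using is_product_rmults is_product_def by blast
  with add show ?case
    by (simp add: mult_product_assoc)
qed simp

lemma lmults_mult: "is_product w \<Longrightarrow> lmults L w \<cdot> b = lmults L (w \<cdot> b)"
proof (induction L)
  case (add l L)
  then obtain p q where "lmults L w = p \<cdot> q"
    using is_product_lmults is_product_def by blast
  with add show ?case
    by (simp flip: mult_product_assoc)
qed simp

lemma rmults_lmults: "is_product w \<Longrightarrow> rmults R (lmults L w) = lmults L (rmults R w)"
  by (induction R) (simp_all add: lmults_mult is_product_rmults)

definition monomial_at :: "nat \<Rightarrow> nat \<Rightarrow> nat multiset \<Rightarrow> nat multiset \<Rightarrow> 'a" where
  "monomial_at l r L R = lmults L (rmults R (v l \<cdot> v r))"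

lemma monomial_at_swap_right: "monomial_at l r L (add_mset r' R) = monomial_at l r' L (add_mset r R)"
  by (simp only: monomial_at_def rmults_add_mset_inner right_comm)

lemma monomial_at_swap_left: "monomial_at l r (add_mset l' L) R = monomial_at l' r (add_mset l L) R"
proof -
  have "v l' \<cdot> rmults R (v l \<cdot> v r) = v l \<cdot> rmults R (v l' \<cdot> v r)"
    by (simp add: mult_rmults left_comm)
  then show ?thesis
    by (simp only: monomial_at_def lmults_add_mset_inner)
qed

lemma monomial_at_cong:
  assumes "add_mset l L = add_mset l' L'" and "add_mset r R = add_mset r' R'"
  shows "monomial_at l r L R = monomial_at l' r' L' R'"
proof -
  have "monomial_at l r L R = monomial_at l' r L' R"
  proof (cases "l = l'")
    case False
    with assms(1) obtain X where "L = add_mset l' X" "L' = add_mset l X"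
      by (auto simp: add_eq_conv_ex)
    then show ?thesis
      using monomial_at_swap_left by simp
  qed (use assms(1) in simp)
  also have "\<dots> = monomial_at l' r' L' R'"
  proof (cases "r = r'")
    case False
    with assms(2) obtain X where "R = add_mset r' X" "R' = add_mset r X"
      by (auto simp: add_eq_conv_ex)
    then show ?thesis
      using monomial_at_swap_right by simp
  qed (use assms(2) in simp)
  finally show ?thesis .
qed

text \<open>Well defined by monomial_at_cong; junk when L or R is empty.\<close>

definition monomial :: "nat multiset \<Rightarrow> nat multiset \<Rightarrow> 'a" where
  "monomial L R =
     (let l = SOME l. l \<in># L; r = SOME r. r \<in># R in monomial_at l r (L - {#l#}) (R - {#r#}))"

lemma monomial_add_mset [simp]: "monomial (add_mset l L) (add_mset r R) = monomial_at l r L R"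
proof -
  define l' where "l' = (SOME x. x \<in># add_mset l L)"
  define r' where "r' = (SOME x. x \<in># add_mset r R)"
  have "l' \<in># add_mset l L" "r' \<in># add_mset r R"
    unfolding l'_def r'_def by (meson some_eq_imp union_single_eq_member)+
  then have "monomial_at l' r' (add_mset l L - {#l'#}) (add_mset r R - {#r'#}) = monomial_at l r L R"
    by (intro monomial_at_cong) simp_all
  then show ?thesis
    by (simp add: monomial_def l'_def r'_def)
qed

lemma mult_monomial:
  "v i \<cdot> monomial (add_mset l L) (add_mset r R) = monomial (add_mset i (add_mset l L)) (add_mset r R)"
  by (simp add: monomial_at_swap_left[of i r l]) (simp add: monomial_at_def)

lemma monomial_mult:
  "monomial (add_mset l L) (add_mset r R) \<cdot> v j = monomial (add_mset l L) (add_mset j (add_mset r R))"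
  by (simp add: monomial_at_swap_right[of l j L r R]) (simp add: monomial_at_def lmults_mult)

lemma lmults_rmults_monomial_at:
  "lmults L' (rmults R' (monomial_at l r L R)) = monomial_at l r (L + L') (R + R')"
  by (simp add: monomial_at_def rmults_lmults)

lemma monomial_mult_monomial:
  "monomial (add_mset l1 L1) (add_mset r1 R1) \<cdot> monomial (add_mset l2 L2) (add_mset r2 R2)
     = monomial (add_mset l1 L1 + add_mset l2 L2) (add_mset r1 R1 + add_mset r2 R2)"
    (is "?x \<cdot> _ = _")
proof -
  have "?x \<cdot> monomial (add_mset l2 L2) (add_mset r2 R2) = lmults L2 (rmults R2 (?x \<cdot> (v l2 \<cdot> v r2)))"
    by (simp only: monomial_add_mset[of l2] monomial_at_def mult_lmults mult_rmults is_product_mult)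
  also have "?x \<cdot> (v l2 \<cdot> v r2) = v l2 \<cdot> (?x \<cdot> v r2)"
    by (rule left_comm)
  also have "\<dots> = v l2 \<cdot> monomial (add_mset l1 L1) (add_mset r2 (add_mset r1 R1))"
    by (simp only: monomial_mult)
  also have "\<dots> = monomial_at l2 r2 (add_mset l1 L1) (add_mset r1 R1)"
    by (subst mult_monomial) simp
  also have "lmults L2 (rmults R2 \<dots>) = monomial_at l2 r2 (add_mset l1 L1 + L2) (add_mset r1 R1 + R2)"
    by (rule lmults_rmults_monomial_at)
  also have "\<dots> = monomial (add_mset l2 (add_mset l1 L1 + L2)) (add_mset r2 (add_mset r1 R1 + R2))"
    by (simp only: monomial_add_mset)
  also have "\<dots> = monomial (add_mset l1 L1 + add_mset l2 L2) (add_mset r1 R1 + add_mset r2 R2)"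
    by simp
  finally show ?thesis .
qed

end

section \<open>Normal form of terms\<close>

text \<open>MProd L R is a product of at least two variables in which those of L occur as left factors
  and those of R as right factors of subproducts.\<close>

datatype mono = MVar nat | MProd "nat multiset" "nat multiset"

fun proper_mono :: "mono \<Rightarrow> bool" where
  "proper_mono (MVar i) \<longleftrightarrow> True"
| "proper_mono (MProd L R) \<longleftrightarrow> L \<noteq> {#} \<and> R \<noteq> {#}"

fun mono_mult :: "mono \<Rightarrow> mono \<Rightarrow> mono" where
  "mono_mult (MVar i) (MVar j) = MProd {#i#} {#j#}"
| "mono_mult (MVar i) (MProd L R) = MProd (add_mset i L) R"
| "mono_mult (MProd L R) (MVar j) = MProd L (add_mset j R)"
| "mono_mult (MProd L1 R1) (MProd L2 R2) = MProd (L1 + L2) (R1 + R2)"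

lemma proper_MProd_cases:
  assumes "proper_mono (MProd L R)"
  obtains l L' r R' where "L = add_mset l L'" and "R = add_mset r R'"
  using assms by (metis multiset_cases proper_mono.simps(2))

lemma proper_mono_mult: "proper_mono m \<Longrightarrow> proper_mono n \<Longrightarrow> proper_mono (mono_mult m n)"
  by (induction m n rule: mono_mult.induct) auto

context bicomm_mult
begin

primrec mono_val :: "mono \<Rightarrow> 'a" where
  "mono_val (MVar i) = v i"
| "mono_val (MProd L R) = monomial L R"

lemma mono_val_mult:
  assumes "proper_mono m" and "proper_mono n"
  shows "mono_val (mono_mult m n) = mono_val m \<cdot> mono_val n"
  using assms
proof (induction m n rule: mono_mult.induct)
  case (1 i j)
  then show ?case by (simp add: monomial_at_def)
next
  case (2 i L R)
  then obtain l L' r R' where "L = add_mset l L'" "R = add_mset r R'"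
    by (blast elim: proper_MProd_cases)
  then show ?case by (simp only: mono_val.simps mono_mult.simps mult_monomial)
next
  case (3 L R j)
  then obtain l L' r R' where "L = add_mset l L'" "R = add_mset r R'"
    by (blast elim: proper_MProd_cases)
  then show ?case by (simp only: mono_val.simps mono_mult.simps monomial_mult)
next
  case (4 L1 R1 L2 R2)
  obtain l1 L1' r1 R1' where "L1 = add_mset l1 L1'" "R1 = add_mset r1 R1'"
    using "4.prems"(1) by (rule proper_MProd_cases)
  moreover obtain l2 L2' r2 R2' where "L2 = add_mset l2 L2'" "R2 = add_mset r2 R2'"
    using "4.prems"(2) by (rule proper_MProd_cases)
  ultimately show ?case by (simp only: mono_val.simps mono_mult.simps monomial_mult_monomial)
qed

end

primrec nf :: "'k::comm_ring_1 npoly \<Rightarrow> ('k \<times> mono) list" where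
  "nf (PVar i) = [(1, MVar i)]"
| "nf PZero = []"
| "nf (PAdd p q) = nf p @ nf q"
| "nf (PSmult c p) = [(c * d, m). (d, m) \<leftarrow> nf p]"
| "nf (PMul p q) = [(c * d, mono_mult m n). (c, m) \<leftarrow> nf p, (d, n) \<leftarrow> nf q]"

lemma proper_mono_nf: "(c, m) \<in> set (nf p) \<Longrightarrow> proper_mono m"
  by (induction p arbitrary: c m) (auto simp: proper_mono_mult)

lemma additive_sum_list:
  fixes h :: "'a::ab_group_add \<Rightarrow> 'b::ab_group_add"
  assumes "\<And>x y. h (x + y) = h x + h y"
  shows "h (\<Sum>x\<leftarrow>xs. g x) = (\<Sum>x\<leftarrow>xs. h (g x))"
proof -
  have "h 0 = 0"
    using assms[of 0 0] by simp
  with assms show ?thesis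
    by (induction xs) simp_all
qed

lemma sum_list_concat: "sum_list (concat xss) = (\<Sum>xs\<leftarrow>xss. sum_list xs)"
  by (induction xss) simp_all

lemma peval_eq_nf_sum:
  assumes "bicomm_algebra scale mul"
  shows "peval scale mul v p = (\<Sum>(c, m)\<leftarrow>nf p. scale c (bicomm_mult.mono_val mul v m))"
proof -
  interpret module scale
    using assms by (simp add: bicomm_algebra_def)
  interpret bicomm_mult mul v
    using assms by (simp add: bicomm_algebra_def bicomm_mult_def)
  have add_left: "mul (x + y) z = mul x z + mul y z"
    and add_right: "mul x (y + z) = mul x y + mul x z"
    and scale_left: "mul (scale c x) y = scale c (mul x y)"
    and scale_right: "mul x (scale c y) = scale c (mul x y)" for x y z c
    using assms by (simp_all add: bicomm_algebra_def)
  have mul_sum_list_left: "mul (\<Sum>x\<leftarrow>xs. g x) y = (\<Sum>x\<leftarrow>xs. mul (g x) y)"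
    and mul_sum_list_right: "mul y (\<Sum>x\<leftarrow>xs. g x) = (\<Sum>x\<leftarrow>xs. mul y (g x))"
    for xs :: "('k \<times> mono) list" and g y
    by (rule additive_sum_list, rule add_left, rule additive_sum_list, rule add_right)
  show ?thesis
  proof (induction p)
    case (PSmult c p)
    then show ?case
      by (simp add: additive_sum_list scale_right_distrib case_prod_beta o_def)
  next
    case (PMul p q)
    let ?F = "\<lambda>(c, m). scale c (mono_val m)"
    have "mul (\<Sum>x\<leftarrow>nf p. ?F x) (\<Sum>y\<leftarrow>nf q. ?F y) = (\<Sum>x\<leftarrow>nf p. \<Sum>y\<leftarrow>nf q. mul (?F x) (?F y))"
      by (simp only: mul_sum_list_left) (simp only: mul_sum_list_right)
    also have "\<dots> = (\<Sum>x\<leftarrow>nf p. \<Sum>y\<leftarrow>nf q. ?F (fst x * fst y, mono_mult (snd x) (snd y)))"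
      by (intro arg_cong[where f = sum_list] map_cong refl)
        (auto simp: scale_left scale_right mono_val_mult proper_mono_nf mult.commute)
    finally show ?case
      using PMul by (simp add: case_prod_beta sum_list_concat map_concat o_def)
  qed (simp_all add: case_prod_beta)
qed

definition nf_coeff :: "'k::comm_ring_1 npoly \<Rightarrow> mono \<Rightarrow> 'k" where
  "nf_coeff p m = (\<Sum>(c, n)\<leftarrow>nf p. if n = m then c else 0)"

lemma nf_coeff_eq_0_if_not_in_nf:
  assumes "m \<notin> snd ` set (nf p)"
  shows "nf_coeff p m = 0"
proof -
  have "(\<Sum>(c, n)\<leftarrow>nf p. if n = m then c else 0) = (\<Sum>x\<leftarrow>nf p. 0)"
    using assms by (intro arg_cong[where f = sum_list] map_cong) force+
  then show ?thesis
    by (simp add: nf_coeff_def)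
qed

lemma (in module) sum_list_scale_eq_sum_coeffs:
  assumes "finite T" and "snd ` set xs \<subseteq> T"
  shows "(\<Sum>(c, m)\<leftarrow>xs. scale c (h m)) = (\<Sum>m\<in>T. scale (\<Sum>(c, n)\<leftarrow>xs. if n = m then c else 0) (h m))"
  using assms(2)
proof (induction xs)
  case (Cons x xs)
  obtain c m0 where x: "x = (c, m0)" by fastforce
  with Cons.prems have "m0 \<in> T" by simp
  have "(\<Sum>m\<in>T. scale (if m0 = m then c else 0) (h m)) = (\<Sum>m\<in>T. if m0 = m then scale c (h m) else 0)"
    by (intro sum.cong) simp_all
  also have "\<dots> = scale c (h m0)"
    using assms(1) \<open>m0 \<in> T\<close> by simp
  finally have delta: "(\<Sum>m\<in>T. scale (if m0 = m then c else 0) (h m)) = scale c (h m0)" .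
  with Cons x delta show ?case
    by (simp add: scale_left_distrib sum.distrib)
qed simp

lemma peval_eq_sum_nf_coeff:
  assumes "bicomm_algebra scale mul"
  shows "peval scale mul v p
    = (\<Sum>m\<in>snd ` set (nf p). scale (nf_coeff p m) (bicomm_mult.mono_val mul v m))"
proof -
  interpret module scale
    using assms by (simp add: bicomm_algebra_def)
  show ?thesis
    unfolding peval_eq_nf_sum[OF assms] nf_coeff_def
    by (rule sum_list_scale_eq_sum_coeffs) auto
qed

section \<open>Linear independence of monomial functions\<close>

lemma coeff_sum_eq_0_if_power_sum_eq_0:
  fixes w :: "'j \<Rightarrow> 'k::{idom,ring_char_0}"
  assumes "finite J" and "\<And>t. (\<Sum>j\<in>J. w j * t ^ e j) = 0"
  shows "(\<Sum>j\<in>{j\<in>J. e j = k}. w j) = 0"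
proof -
  define p where "p = (\<Sum>j\<in>J. monom (w j) (e j))"
  have "poly p t = 0" for t
    using assms(2) by (simp add: p_def poly_sum poly_monom)
  then have "p = 0"
    using poly_all_0_iff_0 by blast
  have "(\<Sum>j\<in>J. if e j = k then w j else 0) = coeff p k"
    by (simp add: p_def coeff_sum)
  also have "\<dots> = 0"
    using \<open>p = 0\<close> by simp
  finally have "(\<Sum>j\<in>J. if e j = k then w j else 0) = 0" .
  then show ?thesis
    using assms(1) by (simp add: sum.inter_filter)
qed

text \<open>Viewing the sum as a polynomial in the value z x, its coefficient of (z x)^k must vanish.\<close>

lemma prod_mset_sum_coeff_eq_0:
  fixes c :: "'j \<Rightarrow> 'k::{idom,ring_char_0}" and g :: "'j \<Rightarrow> 'v multiset"
  assumes "finite S" and "\<And>z. (\<Sum>s\<in>S. c s * (\<Prod>y\<in>#g s. z y)) = 0"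
  shows "(\<Sum>s\<in>{s\<in>S. count (g s) x = k}. c s * (\<Prod>y\<in>#filter_mset (\<lambda>y. y \<noteq> x) (g s). z y)) = 0"
proof -
  have prod_split: "(\<Prod>y\<in>#g s. (z(x := u)) y)
      = u ^ count (g s) x * (\<Prod>y\<in>#filter_mset (\<lambda>y. y \<noteq> x) (g s). z y)" for s u
  proof -
    have split: "g s = replicate_mset (count (g s) x) x + filter_mset (\<lambda>y. y \<noteq> x) (g s)"
      by (metis filter_eq_replicate_mset multiset_partition)
    have "image_mset (z(x := u)) (filter_mset (\<lambda>y. y \<noteq> x) (g s)) = image_mset z (filter_mset (\<lambda>y. y \<noteq> x) (g s))"
      by (rule image_mset_cong) simp
    then show ?thesis
      by (subst split) simp
  qed
  have "(\<Sum>s\<in>S. (c s * (\<Prod>y\<in>#filter_mset (\<lambda>y. y \<noteq> x) (g s). z y)) * u ^ count (g s) x) = 0" for u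
    using assms(2)[of "z(x := u)"] unfolding prod_split by (simp add: ac_simps)
  then show ?thesis
    by (rule coeff_sum_eq_0_if_power_sum_eq_0[OF assms(1)])
qed

lemma prod_mset_funs_independent_over:
  fixes c :: "'j \<Rightarrow> 'k::{idom,ring_char_0}" and g :: "'j \<Rightarrow> 'v multiset"
  assumes "finite V" and "\<forall>t\<in>S. set_mset (g t) \<subseteq> V" and "finite S" and "inj_on g S"
    and "\<forall>z. (\<Sum>t\<in>S. c t * (\<Prod>y\<in>#g t. z y)) = 0" and "s \<in> S"
  shows "c s = 0"
  using assms
proof (induction V arbitrary: S g s rule: finite_induct)
  case empty
  then have "S = {s}"
    by (auto simp: inj_on_def)
  with empty.prems show ?case
    by simp
next
  case (insert x V)
  define D where "D = {t\<in>S. count (g t) x = count (g s) x}"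
  define g' where "g' t = filter_mset (\<lambda>y. y \<noteq> x) (g t)" for t
  have vanish: "\<forall>z. (\<Sum>t\<in>D. c t * (\<Prod>y\<in>#g' t. z y)) = 0"
  proof
    fix z
    show "(\<Sum>t\<in>D. c t * (\<Prod>y\<in>#g' t. z y)) = 0"
      unfolding D_def g'_def
      by (rule prod_mset_sum_coeff_eq_0[OF insert.prems(2)]) (use insert.prems(4) in blast)
  qed
  have inj: "inj_on g' D"
  proof (rule inj_onI)
    fix t1 t2
    assume t: "t1 \<in> D" "t2 \<in> D" "g' t1 = g' t2"
    have "M = replicate_mset (count M x) x + filter_mset (\<lambda>y. y \<noteq> x) M" for M
      by (metis filter_eq_replicate_mset multiset_partition)
    with t have "g t1 = g t2"
      by (metis (mono_tags, lifting) D_def g'_def mem_Collect_eq)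
    with t insert.prems(3) show "t1 = t2"
      by (auto simp: D_def inj_on_def)
  qed
  have vars: "\<forall>t\<in>D. set_mset (g' t) \<subseteq> V"
  proof
    fix t
    assume "t \<in> D"
    with insert.prems(1) have "set_mset (g t) \<subseteq> insert x V"
      by (simp add: D_def)
    then show "set_mset (g' t) \<subseteq> V"
      by (auto simp: g'_def)
  qed
  have "finite D" and "s \<in> D"
    using insert.prems(2,5) by (simp_all add: D_def)
  then show ?case
    using insert.IH[OF vars _ inj vanish] by simp
qed

lemma prod_mset_funs_independent:
  fixes c :: "'j \<Rightarrow> 'k::{idom,ring_char_0}" and g :: "'j \<Rightarrow> 'v multiset"
  assumes "finite S" and "inj_on g S" and "\<And>z. (\<Sum>s\<in>S. c s * (\<Prod>x\<in>#g s. z x)) = 0"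
    and "s \<in> S"
  shows "c s = 0"
  by (rule prod_mset_funs_independent_over[of "\<Union>t\<in>S. set_mset (g t)"]) (use assms in auto)

section \<open>The two-dimensional algebra Q\<close>

definition scaleQ :: "'k::field \<Rightarrow> 'k \<times> 'k \<Rightarrow> 'k \<times> 'k" where
  "scaleQ c x = (c * fst x, c * snd x)"

definition multQ :: "'k::field \<times> 'k \<Rightarrow> 'k \<times> 'k \<Rightarrow> 'k \<times> 'k" where
  "multQ x y = (fst x * snd y, fst x * snd y)"

lemma bicomm_algebra_Q: "bicomm_algebra scaleQ multQ"
  unfolding bicomm_algebra_def module_def scaleQ_def multQ_def by (auto simp: algebra_simps)

text \<open>Q is generated by (2, 1), whose square is (2, 2); the substitution s writes an arbitrary
  element of Q in terms of this generator.\<close>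

lemma holds_in_Q_if_holds_in_F1B:
  fixes f :: "'k::field_char_0 npoly"
  assumes "holds_in_F1B f"
  shows "holds_in scaleQ multQ f"
  unfolding holds_in_def
proof
  fix v :: "nat \<Rightarrow> 'k \<times> 'k"
  define s where "s i =
    PAdd (PSmult (fst (v i) - snd (v i)) (PVar 0))
      (PSmult ((2 * snd (v i) - fst (v i)) / 2) (PMul (PVar 0) (PVar 0)))" for i
  have "beq (psubst s f) PZero"
    using assms by (simp add: holds_in_F1B_def s_def)
  then have "peval scaleQ multQ (\<lambda>_. (2, 1)) (psubst s f) = 0"
    using beq_imp_peval_eq[OF bicomm_algebra_Q] by fastforce
  moreover have "peval scaleQ multQ (\<lambda>_. (2, 1)) (s i) = v i" for i
    by (simp add: s_def scaleQ_def multQ_def prod_eq_iff field_simps)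
  ultimately show "peval scaleQ multQ v f = 0"
    by (simp add: peval_psubst)
qed

primrec mono_vars :: "mono \<Rightarrow> (nat + nat) multiset" where
  "mono_vars (MVar i) = {#Inl i#}"
| "mono_vars (MProd L R) = image_mset Inl L + image_mset Inr R"

lemma inj_on_mono_vars: "inj_on mono_vars {m. proper_mono m}"
proof (rule inj_on_inverseI)
  fix m
  assume "m \<in> {m. proper_mono m}"
  then show "(\<lambda>M. let L = image_mset projl (filter_mset isl M); R = image_mset projr (filter_mset (Not \<circ> isl) M)
      in if R = {#} then MVar (the_elem (set_mset L)) else MProd L R) (mono_vars m) = m"
    by (cases m) (simp_all add: filter_mset_image_mset image_mset.compositionality o_def)
qed

lemma fst_mono_val_Q:
  assumes "proper_mono m"
  shows "fst (bicomm_mult.mono_val multQ (\<lambda>i. (a i, b i)) m) = (\<Prod>y\<in>#mono_vars m. case_sum a b y)"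
proof -
  interpret Q: bicomm_mult multQ "\<lambda>i. (a i, b i)"
    using bicomm_algebra_Q unfolding bicomm_algebra_def bicomm_mult_def by blast
  have lmults: "Q.lmults L (t, t) = ((\<Prod>i\<in>#L. a i) * t, (\<Prod>i\<in>#L. a i) * t)" for L t
    by (induction L) (simp_all, simp add: multQ_def)
  have rmults: "Q.rmults R (t, t) = (t * (\<Prod>i\<in>#R. b i), t * (\<Prod>i\<in>#R. b i))" for R t
    by (induction R) (simp_all, simp add: multQ_def mult.assoc)
  show ?thesis
  proof (cases m)
    case (MProd L R)
    with assms obtain l L' r R' where "L = add_mset l L'" "R = add_mset r R'"
      by (blast elim: proper_MProd_cases)
    with MProd show ?thesis
      by (simp add: Q.monomial_at_def multQ_def lmults rmults image_mset.compositionality o_def mult_ac)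
  qed simp
qed

lemma nf_coeff_eq_0_if_holds_in_Q:
  fixes f :: "'k::field_char_0 npoly"
  assumes "holds_in scaleQ multQ f"
  shows "nf_coeff f m = 0"
proof (cases "m \<in> snd ` set (nf f)")
  case True
  let ?T = "snd ` set (nf f)"
  have vanish: "(\<Sum>n\<in>?T. nf_coeff f n * (\<Prod>y\<in>#mono_vars n. z y)) = 0" for z
  proof -
    let ?v = "\<lambda>i. (z (Inl i), z (Inr i))"
    have "case_sum (\<lambda>i. z (Inl i)) (\<lambda>i. z (Inr i)) = z"
      by (auto simp: fun_eq_iff split: sum.split)
    then have "fst (bicomm_mult.mono_val multQ ?v n) = (\<Prod>y\<in>#mono_vars n. z y)" if "n \<in> ?T" for n
      using fst_mono_val_Q[of n "\<lambda>i. z (Inl i)" "\<lambda>i. z (Inr i)"] proper_mono_nf that by force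
    then have "(\<Sum>n\<in>?T. nf_coeff f n * (\<Prod>y\<in>#mono_vars n. z y))
        = fst (\<Sum>n\<in>?T. scaleQ (nf_coeff f n) (bicomm_mult.mono_val multQ ?v n))"
      by (simp add: fst_sum scaleQ_def)
    also have "\<dots> = fst (peval scaleQ multQ ?v f)"
      by (simp add: peval_eq_sum_nf_coeff[OF bicomm_algebra_Q])
    also have "\<dots> = 0"
      using assms by (simp add: holds_in_def)
    finally show ?thesis .
  qed
  have "inj_on mono_vars ?T"
    by (rule inj_on_subset[OF inj_on_mono_vars]) (auto simp: proper_mono_nf)
  with vanish True show ?thesis
    by (intro prod_mset_funs_independent[of ?T mono_vars "nf_coeff f"]) simp_all
qed (rule nf_coeff_eq_0_if_not_in_nf)

theorem corollary4p5:
  fixes f :: "'k::field_char_0 npoly"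
    and scale :: "'k \<Rightarrow> 'a::ab_group_add \<Rightarrow> 'a"
    and mult :: "'a \<Rightarrow> 'a \<Rightarrow> 'a"
  assumes "holds_in_F1B f"
    and "bicomm_algebra scale mult"
  shows "holds_in scale mult f"
proof -
  interpret module scale
    using assms(2) by (simp add: bicomm_algebra_def)
  have "nf_coeff f m = 0" for m
    using holds_in_Q_if_holds_in_F1B[OF assms(1)] by (rule nf_coeff_eq_0_if_holds_in_Q)
  then show ?thesis
    by (simp add: holds_in_def peval_eq_sum_nf_coeff[OF assms(2)])
qed

end
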